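(* Let $B=(V,E,>)$ be a non-elementary $k$-simple ordered Bratteli diagram with $k\ge2$, and let $L_n$ denote its transition graph at level $n$. If $L_n$ has an edge $v_1$ whose source is the vertex $Y_i$, then there is a closed walk $(v_1,\dots,v_l)$ in $L_n$ starting with $v_1$, i.e., a directed walk whose last edge $v_l$ has range $Y_i$.
   Context: Bratteli diagram: vertex sets $V^0=\{v_0\},V^1,\dots$, edge sets $E^n$ with $s(E^n)=V^n$, $r(E^n)=V^{n+1}$; $w$ at level $m$ is connected to $v$ at level $n<m$ if a finite path goes from $v$ to $w$. $k$-simple: for each $n\ge1$ pairwise disjoint $V^n_1,\dots,V^n_k\subseteq V^n$ with (i) $s(r^{-1}(v))\subseteq V^n_i$ for $v\in V^{n+1}_i$; (ii) for all $i,n$ some $m>n$ with every vertex of $V^m_i$ connected to every vertex of $V^n_i$. $V^n_o:=V^n\setminus\bigcup_iV^n_i$. Non-elementary: for every $n$ there is $m>n$ with the number of paths between any vertex of $V^n_o$ and any vertex of $V^m_o$ equal to $0$ or $\ge2$. An order is a linear order on each $r^{-1}(v)$, extended lexicographically to finite paths with common range; $e+1$ is the successor; $E_{\max},E_{\min}$, $X_{\max},X_{\min}$ are maximal/minimal edges and infinite paths. $k$-simple ordered: (1) $(V,E)$ $k$-simple; (2) infinite paths $z_{i,\max},z_{i,\min}$ with level-$n$ vertices in $V^n_i$, and $X_{\max}=\{z_{i,\max}\}_{i}$, $X_{\min}=\{z_{i,\min}\}_i$; there is $L$ such that for $n\ge L$, $v\in V^n_o$, the maximal (resp. minimal) path from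 $v_0$ to $v$ passes at level $1$ through $V^1_i$, written $m_+(v)=i$ (resp. $m_-(v)=i$); (3) for $v\in V^n_o$: (a) every edge $e$ with $s(e)=v$ satisfies $m_-(s(e+1))=m_+(v)$ (for maximal $e$, $s(e+1)$ means the level-$n$ source of the successor of a non-maximal finite path beginning with $e$); (b) if $e\notin E_{\max}$, $r(e)=v$, $s(e)\in V^{n-1}_i$, $n\ge3$, then $m_-(s(e+1))=i$. The transition graph $L_n$ (for $n\ge\max(2,L)$) is the directed multigraph with vertices $Y_1,\dots,Y_k$ and, for each $v\in V^n_o$, one edge labelled $v$ from $Y_{m_-(v)}$ to $Y_{m_+(v)}$. *)

theory Defs
  imports Main
begin

text \<open>The order is a relation ord: (e, e') in ord means e < e'
 (only meaningful for edges with the same range).\<close>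

definition bratteli :: "(nat \<Rightarrow> 'v set) \<Rightarrow> (nat \<Rightarrow> 'e set) \<Rightarrow> ('e \<Rightarrow> 'v) \<Rightarrow> ('e \<Rightarrow> 'v) \<Rightarrow> bool" where
  "bratteli V E s r \<longleftrightarrow>
     (\<exists>v0. V 0 = {v0}) \<and>
     (\<forall>n. finite (V n) \<and> finite (E n) \<and> s ` E n = V n \<and> r ` E n = V (Suc n)) \<and>
     (\<forall>n m. n \<noteq> m \<longrightarrow> V n \<inter> V m = {})"

definition fpath :: "(nat \<Rightarrow> 'e set) \<Rightarrow> ('e \<Rightarrow> 'v) \<Rightarrow> ('e \<Rightarrow> 'v) \<Rightarrow> nat \<Rightarrow> 'e list \<Rightarrow> bool" where
  "fpath E s r n p \<longleftrightarrow>
     (\<forall>j<length p. p ! j \<in> E (n + j)) \<and>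
     (\<forall>j. Suc j < length p \<longrightarrow> r (p ! j) = s (p ! Suc j))"

definition paths_between :: "(nat \<Rightarrow> 'e set) \<Rightarrow> ('e \<Rightarrow> 'v) \<Rightarrow> ('e \<Rightarrow> 'v) \<Rightarrow> nat \<Rightarrow> nat \<Rightarrow> 'v \<Rightarrow> 'v \<Rightarrow> 'e list set" where
  "paths_between E s r n m v w =
     {p. fpath E s r n p \<and> length p = m - n \<and> p \<noteq> [] \<and> s (hd p) = v \<and> r (last p) = w}"

definition connected :: "(nat \<Rightarrow> 'e set) \<Rightarrow> ('e \<Rightarrow> 'v) \<Rightarrow> ('e \<Rightarrow> 'v) \<Rightarrow> nat \<Rightarrow> nat \<Rightarrow> 'v \<Rightarrow> 'v \<Rightarrow> bool" where
  "connected E s r n m v w \<longleftrightarrow> n < m \<and> paths_between E s r n m v w \<noteq> {}"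

definition is_order :: "(nat \<Rightarrow> 'v set) \<Rightarrow> (nat \<Rightarrow> 'e set) \<Rightarrow> ('e \<Rightarrow> 'v) \<Rightarrow> 'e rel \<Rightarrow> bool" where
  "is_order V E r ord \<longleftrightarrow>
     (\<forall>n v. v \<in> V (Suc n) \<longrightarrow>
        (let A = {e \<in> E n. r e = v} in strict_linear_order_on A (ord \<inter> (A \<times> A))))"

definition emax :: "(nat \<Rightarrow> 'e set) \<Rightarrow> ('e \<Rightarrow> 'v) \<Rightarrow> 'e rel \<Rightarrow> nat \<Rightarrow> 'e \<Rightarrow> bool" where
  "emax E r ord n e \<longleftrightarrow> e \<in> E n \<and> (\<forall>e'\<in>E n. r e' = r e \<longrightarrow> (e, e') \<notin> ord)"

definition emin :: "(nat \<Rightarrow> 'e set) \<Rightarrow> ('e \<Rightarrow> 'v) \<Rightarrow> 'e rel \<Rightarrow> nat \<Rightarrow> 'e \<Rightarrow> bool" where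
  "emin E r ord n e \<longleftrightarrow> e \<in> E n \<and> (\<forall>e'\<in>E n. r e' = r e \<longrightarrow> (e', e) \<notin> ord)"

text \<open>lexicographic order on paths of equal length (compare at the highest differing edge)\<close>
definition plex :: "'e rel \<Rightarrow> 'e list \<Rightarrow> 'e list \<Rightarrow> bool" where
  "plex ord p q \<longleftrightarrow> length p = length q \<and>
     (\<exists>k<length p. (p ! k, q ! k) \<in> ord \<and> (\<forall>j. k < j \<and> j < length p \<longrightarrow> p ! j = q ! j))"

definition is_succ :: "(nat \<Rightarrow> 'e set) \<Rightarrow> ('e \<Rightarrow> 'v) \<Rightarrow> ('e \<Rightarrow> 'v) \<Rightarrow> 'e rel \<Rightarrow> nat \<Rightarrow> 'e list \<Rightarrow> 'e list \<Rightarrow> bool" where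
  "is_succ E s r ord n p q \<longleftrightarrow>
     fpath E s r n p \<and> fpath E s r n q \<and> p \<noteq> [] \<and> length q = length p \<and>
     r (last q) = r (last p) \<and> plex ord p q \<and>
     \<not> (\<exists>u. fpath E s r n u \<and> length u = length p \<and> r (last u) = r (last p) \<and>
            plex ord p u \<and> plex ord u q)"

definition max_through :: "(nat \<Rightarrow> 'v set) \<Rightarrow> (nat \<Rightarrow> 'e set) \<Rightarrow> ('e \<Rightarrow> 'v) \<Rightarrow> ('e \<Rightarrow> 'v) \<Rightarrow> 'e rel \<Rightarrow> (nat \<Rightarrow> nat \<Rightarrow> 'v set) \<Rightarrow> 'v \<Rightarrow> nat \<Rightarrow> bool" where
  "max_through V E s r ord P v i \<longleftrightarrow>
     (\<exists>p. fpath E s r 0 p \<and> p \<noteq> [] \<and> r (last p) = v \<and>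
          (\<forall>j<length p. emax E r ord j (p ! j)) \<and> r (p ! 0) \<in> P 1 i)"

definition min_through :: "(nat \<Rightarrow> 'v set) \<Rightarrow> (nat \<Rightarrow> 'e set) \<Rightarrow> ('e \<Rightarrow> 'v) \<Rightarrow> ('e \<Rightarrow> 'v) \<Rightarrow> 'e rel \<Rightarrow> (nat \<Rightarrow> nat \<Rightarrow> 'v set) \<Rightarrow> 'v \<Rightarrow> nat \<Rightarrow> bool" where
  "min_through V E s r ord P v i \<longleftrightarrow>
     (\<exists>p. fpath E s r 0 p \<and> p \<noteq> [] \<and> r (last p) = v \<and>
          (\<forall>j<length p. emin E r ord j (p ! j)) \<and> r (p ! 0) \<in> P 1 i)"

definition ipath :: "(nat \<Rightarrow> 'e set) \<Rightarrow> ('e \<Rightarrow> 'v) \<Rightarrow> ('e \<Rightarrow> 'v) \<Rightarrow> (nat \<Rightarrow> 'e) \<Rightarrow> bool" where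
  "ipath E s r x \<longleftrightarrow> (\<forall>j. x j \<in> E j \<and> r (x j) = s (x (Suc j)))"

definition Xmax :: "(nat \<Rightarrow> 'e set) \<Rightarrow> ('e \<Rightarrow> 'v) \<Rightarrow> ('e \<Rightarrow> 'v) \<Rightarrow> 'e rel \<Rightarrow> (nat \<Rightarrow> 'e) set" where
  "Xmax E s r ord = {x. ipath E s r x \<and> (\<forall>j. emax E r ord j (x j))}"

definition Xmin :: "(nat \<Rightarrow> 'e set) \<Rightarrow> ('e \<Rightarrow> 'v) \<Rightarrow> ('e \<Rightarrow> 'v) \<Rightarrow> 'e rel \<Rightarrow> (nat \<Rightarrow> 'e) set" where
  "Xmin E s r ord = {x. ipath E s r x \<and> (\<forall>j. emin E r ord j (x j))}"

definition Vo :: "(nat \<Rightarrow> 'v set) \<Rightarrow> (nat \<Rightarrow> nat \<Rightarrow> 'v set) \<Rightarrow> nat \<Rightarrow> nat \<Rightarrow> 'v set" where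
  "Vo V P k n = V n - (\<Union>i\<in>{1..k}. P n i)"

definition k_simple :: "(nat \<Rightarrow> 'v set) \<Rightarrow> (nat \<Rightarrow> 'e set) \<Rightarrow> ('e \<Rightarrow> 'v) \<Rightarrow> ('e \<Rightarrow> 'v) \<Rightarrow> nat \<Rightarrow> (nat \<Rightarrow> nat \<Rightarrow> 'v set) \<Rightarrow> bool" where
  "k_simple V E s r k P \<longleftrightarrow>
     bratteli V E s r \<and>
     (\<forall>n\<ge>1. (\<forall>i\<in>{1..k}. P n i \<subseteq> V n) \<and>
             (\<forall>i\<in>{1..k}. \<forall>j\<in>{1..k}. i \<noteq> j \<longrightarrow> P n i \<inter> P n j = {})) \<and>
     (\<forall>n\<ge>1. \<forall>i\<in>{1..k}. \<forall>v\<in>P (Suc n) i. \<forall>e\<in>E n. r e = v \<longrightarrow> s e \<in> P n i) \<and>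
     (\<forall>n\<ge>1. \<forall>i\<in>{1..k}. \<exists>m>n. \<forall>w\<in>P m i. \<forall>v\<in>P n i. connected E s r n m v w)"

definition non_elementary :: "(nat \<Rightarrow> 'v set) \<Rightarrow> (nat \<Rightarrow> 'e set) \<Rightarrow> ('e \<Rightarrow> 'v) \<Rightarrow> ('e \<Rightarrow> 'v) \<Rightarrow> nat \<Rightarrow> (nat \<Rightarrow> nat \<Rightarrow> 'v set) \<Rightarrow> bool" where
  "non_elementary V E s r k P \<longleftrightarrow>
     (\<forall>n\<ge>1. \<exists>m>n. \<forall>v\<in>Vo V P k n. \<forall>w\<in>Vo V P k m.
        card (paths_between E s r n m v w) = 0 \<or> card (paths_between E s r n m v w) \<ge> 2)"

text \<open>k-simple ordered Bratteli diagram, with the constant L of condition (2) as parameter\<close>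
definition k_simple_ordered :: "(nat \<Rightarrow> 'v set) \<Rightarrow> (nat \<Rightarrow> 'e set) \<Rightarrow> ('e \<Rightarrow> 'v) \<Rightarrow> ('e \<Rightarrow> 'v) \<Rightarrow> 'e rel \<Rightarrow> nat \<Rightarrow> (nat \<Rightarrow> nat \<Rightarrow> 'v set) \<Rightarrow> nat \<Rightarrow> bool" where
  "k_simple_ordered V E s r ord k P L \<longleftrightarrow>
     k_simple V E s r k P \<and> is_order V E r ord \<and>
     (\<exists>zmax zmin.
        (\<forall>i\<in>{1..k}. ipath E s r (zmax i) \<and> ipath E s r (zmin i) \<and>
           (\<forall>n\<ge>1. s (zmax i n) \<in> P n i \<and> s (zmin i n) \<in> P n i)) \<and>
        Xmax E s r ord = zmax ` {1..k} \<and> Xmin E s r ord = zmin ` {1..k}) \<and>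
     (\<forall>n. n \<ge> L \<and> n \<ge> 1 \<longrightarrow> (\<forall>v\<in>Vo V P k n.
        (\<exists>i\<in>{1..k}. max_through V E s r ord P v i) \<and>
        (\<exists>i\<in>{1..k}. min_through V E s r ord P v i))) \<and>
     \<comment> \<open>(3a)\<close>
     (\<forall>n. n \<ge> L \<and> n \<ge> 1 \<longrightarrow> (\<forall>v\<in>Vo V P k n. \<forall>e\<in>E n. s e = v \<longrightarrow>
        (\<forall>p q. p \<noteq> [] \<and> hd p = e \<and> is_succ E s r ord n p q \<longrightarrow>
           (\<exists>i\<in>{1..k}. max_through V E s r ord P v i \<and>
                        min_through V E s r ord P (s (hd q)) i)))) \<and>
     \<comment> \<open>(3b)\<close>
     (\<forall>n\<ge>3. \<forall>v\<in>Vo V P k n. \<forall>e\<in>E (n - 1). r e = v \<and> \<not> emax E r ord (n - 1) e \<longrightarrow>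
        (\<forall>i\<in>{1..k}. s e \<in> P (n - 1) i \<longrightarrow>
           (\<forall>q. is_succ E s r ord (n - 1) [e] q \<longrightarrow>
                 min_through V E s r ord P (s (hd q)) i)))"

text \<open>transition graph L_n: edge v from Y_a to Y_b\<close>
definition tg_edge :: "(nat \<Rightarrow> 'v set) \<Rightarrow> (nat \<Rightarrow> 'e set) \<Rightarrow> ('e \<Rightarrow> 'v) \<Rightarrow> ('e \<Rightarrow> 'v) \<Rightarrow> 'e rel \<Rightarrow> nat \<Rightarrow> (nat \<Rightarrow> nat \<Rightarrow> 'v set) \<Rightarrow> nat \<Rightarrow> 'v \<Rightarrow> nat \<Rightarrow> nat \<Rightarrow> bool" where
  "tg_edge V E s r ord k P n v a b \<longleftrightarrow>
     v \<in> Vo V P k n \<and> a \<in> {1..k} \<and> b \<in> {1..k} \<and>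
     min_through V E s r ord P v a \<and> max_through V E s r ord P v b"

definition tg_walk :: "(nat \<Rightarrow> 'v set) \<Rightarrow> (nat \<Rightarrow> 'e set) \<Rightarrow> ('e \<Rightarrow> 'v) \<Rightarrow> ('e \<Rightarrow> 'v) \<Rightarrow> 'e rel \<Rightarrow> nat \<Rightarrow> (nat \<Rightarrow> nat \<Rightarrow> 'v set) \<Rightarrow> nat \<Rightarrow> 'v list \<Rightarrow> nat \<Rightarrow> nat \<Rightarrow> bool" where
  "tg_walk V E s r ord k P n vs a b \<longleftrightarrow>
     (\<exists>ys. length ys = Suc (length vs) \<and> vs \<noteq> [] \<and> ys ! 0 = a \<and> ys ! length vs = b \<and>
        (\<forall>j<length vs. tg_edge V E s r ord k P n (vs ! j) (ys ! j) (ys ! Suc j)))"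

end

theory Submission
  imports Defs
begin

text \<open>Extend the labels \<open>m\<^sub>+\<close> and \<open>m\<^sub>-\<close> from \<open>V\<^sup>n\<^sub>o\<close> to every vertex of level \<open>n\<close>
  by giving the vertices of \<open>V\<^sup>n\<^sub>a\<close> the label \<open>a\<close>. If \<open>q\<close> is the successor of a path \<open>p\<close>
  starting at level \<open>n\<close>, the two paths differ at a pivot edge below which \<open>p\<close> consists of
  maximal and \<open>q\<close> of minimal edges; carrying \<open>m\<^sub>+\<close> up along \<open>p\<close>, across the pivot by
  conditions (3a)/(3b), and \<open>m\<^sub>-\<close> back down along \<open>q\<close> gives
  \<open>m\<^sub>+(s p) = m\<^sub>-(s q)\<close>. Every vertex \<open>u\<close> of level \<open>n\<close> yields a walk in \<open>L\<^sub>n\<close> from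
  \<open>Y\<^bsub>m\<^sub>-(u)\<^esub>\<close> to \<open>Y\<^bsub>m\<^sub>+(u)\<^esub>\<close> (the edge \<open>u\<close>, or nothing if \<open>u \<notin> V\<^sup>n\<^sub>o\<close>).
  Non-elementarity gives two paths \<open>p < q\<close> from \<open>v\<^sub>1\<close> to a common vertex; following
  the successors from \<open>p\<close> to \<open>q\<close> chains these walks into one from
  \<open>Y\<^bsub>m\<^sub>+(v\<^sub>1)\<^esub> = Y\<^sub>j\<close> to \<open>Y\<^bsub>m\<^sub>-(v\<^sub>1)\<^esub> = Y\<^sub>i\<close>, closed up by the edge \<open>v\<^sub>1\<close>.\<close>

section \<open>Finite paths\<close>

lemma fpath_Nil [simp]: "fpath E s r l []"
  unfolding fpath_def by auto

lemma fpath_Cons: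
  "fpath E s r l (e # p) \<longleftrightarrow> e \<in> E l \<and> fpath E s r (Suc l) p \<and> (p \<noteq> [] \<longrightarrow> r e = s (hd p))"
  unfolding fpath_def
  by (auto simp: nth_Cons' hd_conv_nth less_Suc_eq_0_disj split: if_splits)

lemma fpath_singleton [simp]: "fpath E s r l [e] \<longleftrightarrow> e \<in> E l"
  by (simp add: fpath_Cons)

lemma fpath_append:
  "fpath E s r l (p @ q) \<longleftrightarrow>
     fpath E s r l p \<and> fpath E s r (l + length p) q \<and>
     (p \<noteq> [] \<longrightarrow> q \<noteq> [] \<longrightarrow> r (last p) = s (hd q))"
  by (induction p arbitrary: l) (auto simp: fpath_Cons)

lemma fpath_take: "fpath E s r l p \<Longrightarrow> fpath E s r l (take j p)"
  using fpath_append[of E s r l "take j p" "drop j p"] by simp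

lemma fpath_drop: "fpath E s r l p \<Longrightarrow> j \<le> length p \<Longrightarrow> fpath E s r (l + j) (drop j p)"
  using fpath_append[of E s r l "take j p" "drop j p"] by simp

lemma fpath_nth: "fpath E s r l p \<Longrightarrow> j < length p \<Longrightarrow> p ! j \<in> E (l + j)"
  unfolding fpath_def by blast

lemma fpath_link: "fpath E s r l p \<Longrightarrow> Suc j < length p \<Longrightarrow> r (p ! j) = s (p ! Suc j)"
  unfolding fpath_def by blast

locale bratteli_diagram =
  fixes V :: "nat \<Rightarrow> 'v set" and E :: "nat \<Rightarrow> 'e set" and s r :: "'e \<Rightarrow> 'v"
  assumes bratteli: "bratteli V E s r"
begin

lemma source_in_level: "e \<in> E l \<Longrightarrow> s e \<in> V l"
  using bratteli unfolding bratteli_def by blast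

lemma range_in_level: "e \<in> E l \<Longrightarrow> r e \<in> V (Suc l)"
  using bratteli unfolding bratteli_def by blast

lemma ex_edge_from: "y \<in> V l \<Longrightarrow> \<exists>e\<in>E l. s e = y"
  using bratteli unfolding bratteli_def by (metis imageE)

lemma ex_edge_to: "y \<in> V (Suc l) \<Longrightarrow> \<exists>e\<in>E l. r e = y"
  using bratteli unfolding bratteli_def by (metis imageE)

lemma level_unique: "y \<in> V l \<Longrightarrow> y \<in> V l' \<Longrightarrow> l = l'"
  using bratteli unfolding bratteli_def by blast

lemma finite_edges: "finite (E l)"
  using bratteli unfolding bratteli_def by blast

lemma fpath_hd_in_level: "fpath E s r l p \<Longrightarrow> p \<noteq> [] \<Longrightarrow> s (hd p) \<in> V l"
  by (metis add_0_right fpath_nth hd_conv_nth length_greater_0_conv source_in_level)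

lemma fpath_last_in_level: "fpath E s r l p \<Longrightarrow> p \<noteq> [] \<Longrightarrow> r (last p) \<in> V (l + length p)"
  using fpath_nth[of E s r l p "length p - 1"] range_in_level
  by (cases p rule: rev_cases) auto

lemma fpath_from_root_length:
  "fpath E s r 0 p \<Longrightarrow> p \<noteq> [] \<Longrightarrow> r (last p) \<in> V l \<Longrightarrow> length p = l"
  using fpath_last_in_level level_unique by fastforce

lemma ex_fpath_to:
  "y \<in> V (l + j) \<Longrightarrow> \<exists>p. fpath E s r l p \<and> length p = j \<and> (j > 0 \<longrightarrow> r (last p) = y)"
proof (induction j arbitrary: y)
  case 0
  show ?case by (intro exI[of _ "[]"]) simp
next
  case (Suc j)
  obtain e where e: "e \<in> E (l + j)" "r e = y"
    using ex_edge_to Suc.prems by (metis add_Suc_right)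
  obtain p where "fpath E s r l p" "length p = j" "j > 0 \<longrightarrow> r (last p) = s e"
    using Suc.IH[OF source_in_level[OF e(1)]] by blast
  with e show ?case
    by (intro exI[of _ "p @ [e]"]) (auto simp: fpath_append)
qed

lemma ex_fpath_from:
  "y \<in> V l \<Longrightarrow> \<exists>p. fpath E s r l p \<and> length p = Suc j \<and> s (hd p) = y"
proof (induction j)
  case 0
  then obtain e where "e \<in> E l" "s e = y" using ex_edge_from by blast
  then show ?case by (intro exI[of _ "[e]"]) auto
next
  case (Suc j)
  then obtain p where p: "fpath E s r l p" "length p = Suc j" "s (hd p) = y" by blast
  then have "r (last p) \<in> V (l + Suc j)"
    using fpath_last_in_level by fastforce
  then obtain e where "e \<in> E (l + Suc j)" "s e = r (last p)" using ex_edge_from by blast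
  with p show ?case
    by (intro exI[of _ "p @ [e]"]) (auto simp: fpath_append hd_append)
qed

definition edge_selector :: "(nat \<Rightarrow> 'e \<Rightarrow> bool) \<Rightarrow> bool" where
  "edge_selector Q \<longleftrightarrow> (\<forall>l e e'. Q l e \<longrightarrow> Q l e' \<longrightarrow> r e = r e' \<longrightarrow> e = e')"

definition paths_to :: "nat \<Rightarrow> nat \<Rightarrow> 'v \<Rightarrow> 'e list set" where
  "paths_to l d w = {p. fpath E s r l p \<and> length p = d \<and> r (last p) = w}"

lemma finite_paths_to: "finite (paths_to l d w)"
proof (rule finite_subset)
  show "paths_to l d w \<subseteq> {p. set p \<subseteq> (\<Union>j<d. E (l + j)) \<and> length p = d}"
    unfolding paths_to_def using fpath_nth by (fastforce simp: in_set_conv_nth)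
  show "finite {p. set p \<subseteq> (\<Union>j<d. E (l + j)) \<and> length p = d}"
    by (rule finite_lists_length_eq) (simp add: finite_edges)
qed

lemma fpath_replace_edge:
  assumes p: "fpath E s r l p" and j: "j < length p"
    and e: "e \<in> E (l + j)" "r e = r (p ! j)"
  obtains u where "fpath E s r l u" "length u = length p" "u ! j = e"
    "\<forall>i. j < i \<and> i < length p \<longrightarrow> u ! i = p ! i" "r (last u) = r (last p)"
proof -
  obtain pre where pre: "fpath E s r l pre" "length pre = j" "j > 0 \<longrightarrow> r (last pre) = s e"
    using ex_fpath_to[OF source_in_level[OF e(1)]] by blast
  define u where "u = pre @ e # drop (Suc j) p"
  have "drop (Suc j) p \<noteq> [] \<Longrightarrow> r e = s (hd (drop (Suc j) p))"
    using fpath_link[OF p] e(2) by (simp add: hd_drop_conv_nth)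
  then have "fpath E s r (l + j) (e # drop (Suc j) p)"
    using fpath_drop[OF p, of "Suc j"] j e(1) by (simp add: fpath_Cons)
  then have "fpath E s r l u"
    using pre unfolding u_def by (subst fpath_append) auto
  moreover have "r (last u) = r (last p)"
  proof (cases "Suc j < length p")
    case True
    then show ?thesis by (simp add: u_def)
  next
    case False
    then have "last p = p ! j" using j by (metis Suc_lessI diff_Suc_1 last_conv_nth list.size(3) not_less0)
    then show ?thesis using False e(2) by (simp add: u_def)
  qed
  moreover have "\<forall>i. j < i \<and> i < length p \<longrightarrow> u ! i = p ! i"
    using pre by (auto simp: u_def nth_append)
  ultimately show thesis
    using that pre j by (simp add: u_def nth_append)
qed

end

section \<open>Lexicographic order and successors of paths\<close>

locale ordered_bratteli = bratteli_diagram V E s r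
  for V :: "nat \<Rightarrow> 'v set" and E :: "nat \<Rightarrow> 'e set" and s r :: "'e \<Rightarrow> 'v" +
  fixes ord :: "'e rel"
  assumes is_order: "is_order V E r ord"
begin

lemma siblings_strict_linear_order:
  assumes "e \<in> E l"
  shows "strict_linear_order_on {x \<in> E l. r x = r e} (ord \<inter> ({x \<in> E l. r x = r e} \<times> {x \<in> E l. r x = r e}))"
  using is_order range_in_level[OF assms] unfolding is_order_def Let_def by blast

lemma ord_irrefl: "e \<in> E l \<Longrightarrow> (e, e) \<notin> ord"
  using siblings_strict_linear_order unfolding strict_linear_order_on_def irrefl_def by blast

lemma ord_total:
  "e \<in> E l \<Longrightarrow> f \<in> E l \<Longrightarrow> r e = r f \<Longrightarrow> e \<noteq> f \<Longrightarrow> (e, f) \<in> ord \<or> (f, e) \<in> ord"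
  using siblings_strict_linear_order[of e l]
  unfolding strict_linear_order_on_def total_on_def by auto

lemma ord_trans:
  assumes "e \<in> E l" "f \<in> E l" "g \<in> E l" "r e = r f" "r f = r g" "(e, f) \<in> ord" "(f, g) \<in> ord"
  shows "(e, g) \<in> ord"
proof -
  have "trans (ord \<inter> ({x \<in> E l. r x = r e} \<times> {x \<in> E l. r x = r e}))"
    using siblings_strict_linear_order[OF assms(1)] unfolding strict_linear_order_on_def by blast
  then show ?thesis using assms by (auto dest: transD)
qed

lemma edge_selector_emax: "edge_selector (emax E r ord)"
  unfolding edge_selector_def emax_def using ord_total by metis

lemma edge_selector_emin: "edge_selector (emin E r ord)"
  unfolding edge_selector_def emin_def using ord_total by metis

lemma plex_nonempty: "plex ord p q \<Longrightarrow> p \<noteq> []"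
  unfolding plex_def by (cases p) simp_all

lemma plexI:
  "length p = length q \<Longrightarrow> j < length p \<Longrightarrow> (p ! j, q ! j) \<in> ord \<Longrightarrow>
   \<forall>i. j < i \<and> i < length p \<longrightarrow> p ! i = q ! i \<Longrightarrow> plex ord p q"
  unfolding plex_def by blast

lemma fpath_same_range_nth:
  assumes p: "fpath E s r l p" and q: "fpath E s r l q" and len: "length q = length p"
    and last: "r (last p) = r (last q)" and j: "j < length p"
    and agree: "\<forall>i. j < i \<and> i < length p \<longrightarrow> p ! i = q ! i"
  shows "r (p ! j) = r (q ! j)"
proof (cases "Suc j < length p")
  case True
  then show ?thesis using fpath_link[OF p True] fpath_link[OF q] agree len by auto
next
  case False
  then have "last p = p ! j" "last q = q ! j"
    using j len by (metis Suc_lessI diff_Suc_1 last_conv_nth list.size(3) not_less0)+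
  then show ?thesis using last by simp
qed

lemma plex_irrefl: "fpath E s r l p \<Longrightarrow> \<not> plex ord p p"
  unfolding plex_def using fpath_nth ord_irrefl by blast

lemma plex_trans:
  assumes p: "fpath E s r l p" and q: "fpath E s r l q" and u: "fpath E s r l u"
    and rq: "r (last p) = r (last q)" and ru: "r (last q) = r (last u)"
    and pq: "plex ord p q" and qu: "plex ord q u"
  shows "plex ord p u"
proof -
  obtain j1 where j1: "j1 < length p" "(p ! j1, q ! j1) \<in> ord"
    "\<forall>i. j1 < i \<and> i < length p \<longrightarrow> p ! i = q ! i" and lq: "length p = length q"
    using pq unfolding plex_def by blast
  obtain j2 where j2: "j2 < length p" "(q ! j2, u ! j2) \<in> ord"
    "\<forall>i. j2 < i \<and> i < length p \<longrightarrow> q ! i = u ! i" and lu: "length q = length u"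
    using qu lq unfolding plex_def by auto
  consider "j1 < j2" | "j2 < j1" | "j1 = j2" by linarith
  then show ?thesis
  proof cases
    case 1
    then show ?thesis using j1 j2 lq lu by (intro plexI[of _ _ j2]) auto
  next
    case 2
    then show ?thesis using j1 j2 lq lu by (intro plexI[of _ _ j1]) auto
  next
    case 3
    have "r (p ! j1) = r (q ! j1)"
      using fpath_same_range_nth[OF p q _ rq j1(1,3)] lq by simp
    moreover have "r (q ! j1) = r (u ! j1)"
      using fpath_same_range_nth[OF q u _ ru] lq lu j2 3 by simp
    ultimately
    have "(p ! j1, u ! j1) \<in> ord"
      using ord_trans[OF fpath_nth[OF p j1(1)] fpath_nth[OF q] fpath_nth[OF u]] j1 j2 3 lq lu
      by simp
    then show ?thesis using j1 j2 3 lq lu by (intro plexI[of _ _ j1]) auto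
  qed
qed

lemma plex_total:
  assumes p: "fpath E s r l p" and q: "fpath E s r l q" and len: "length q = length p"
    and last: "r (last p) = r (last q)" and "p \<noteq> q"
  shows "plex ord p q \<or> plex ord q p"
proof -
  define D where "D = {i. i < length p \<and> p ! i \<noteq> q ! i}"
  have "finite D" by (simp add: D_def)
  have "D \<noteq> {}"
  proof
    assume "D = {}"
    then have "p = q" using len by (intro nth_equalityI) (auto simp: D_def)
    with \<open>p \<noteq> q\<close> show False ..
  qed
  define j where "j = Max D"
  have j: "j < length p" "p ! j \<noteq> q ! j"
    using Max_in[OF \<open>finite D\<close> \<open>D \<noteq> {}\<close>] by (simp_all add: j_def D_def)
  have agree: "\<forall>i. j < i \<and> i < length p \<longrightarrow> p ! i = q ! i"
  proof (intro allI impI)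
    fix i assume "j < i \<and> i < length p"
    then have "i \<notin> D" using Max_ge[OF \<open>finite D\<close>, of i] unfolding j_def by linarith
    with \<open>j < i \<and> i < length p\<close> show "p ! i = q ! i" by (simp add: D_def)
  qed
  have "r (p ! j) = r (q ! j)"
    using fpath_same_range_nth[OF p q len last j(1) agree] .
  then have "(p ! j, q ! j) \<in> ord \<or> (q ! j, p ! j) \<in> ord"
    using ord_total[OF fpath_nth[OF p j(1)] fpath_nth[OF q]] j len by simp
  then show ?thesis
    using plexI[of p q j] plexI[of q p j] j agree len by auto
qed

lemma is_succ_no_between:
  "is_succ E s r ord l p q \<Longrightarrow> fpath E s r l u \<Longrightarrow> length u = length p \<Longrightarrow>
   r (last u) = r (last p) \<Longrightarrow> plex ord p u \<Longrightarrow> plex ord u q \<Longrightarrow> False"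
  unfolding is_succ_def by blast

text \<open>Below the pivot, a non-maximal edge of \<open>p\<close> (non-minimal edge of \<open>q\<close>) could be
  raised (lowered) to give a path strictly between \<open>p\<close> and \<open>q\<close>.\<close>

context
  fixes l p q k0
  assumes succ: "is_succ E s r ord l p q"
    and pivot: "k0 < length p" "(p ! k0, q ! k0) \<in> ord"
      "\<forall>i. k0 < i \<and> i < length p \<longrightarrow> p ! i = q ! i"
begin

lemma is_succ_emax_below_pivot:
  assumes "j < k0"
  shows "emax E r ord (l + j) (p ! j)"
proof (rule ccontr)
  assume "\<not> emax E r ord (l + j) (p ! j)"
  have p: "fpath E s r l p" and len: "length q = length p"
    using succ unfolding is_succ_def by auto
  have j: "j < length p" using assms pivot by simp
  obtain e where e: "e \<in> E (l + j)" "r e = r (p ! j)" "(p ! j, e) \<in> ord"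
    using \<open>\<not> emax E r ord (l + j) (p ! j)\<close> fpath_nth[OF p j] unfolding emax_def by blast
  obtain u where u: "fpath E s r l u" "length u = length p" "u ! j = e"
    "\<forall>i. j < i \<and> i < length p \<longrightarrow> u ! i = p ! i" "r (last u) = r (last p)"
    using fpath_replace_edge[OF p j e(1,2)] by blast
  have "plex ord p u" using u e j by (intro plexI[of _ _ j]) auto
  moreover have "plex ord u q" using u pivot assms len by (intro plexI[of _ _ k0]) auto
  ultimately show False using is_succ_no_between[OF succ u(1,2,5)] by blast
qed

lemma is_succ_emin_below_pivot:
  assumes "j < k0"
  shows "emin E r ord (l + j) (q ! j)"
proof (rule ccontr)
  assume "\<not> emin E r ord (l + j) (q ! j)"
  have q: "fpath E s r l q" and len: "length q = length p" and last: "r (last q) = r (last p)"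
    using succ unfolding is_succ_def by auto
  have j: "j < length q" using assms pivot len by simp
  obtain e where e: "e \<in> E (l + j)" "r e = r (q ! j)" "(e, q ! j) \<in> ord"
    using \<open>\<not> emin E r ord (l + j) (q ! j)\<close> fpath_nth[OF q j] unfolding emin_def by blast
  obtain u where u: "fpath E s r l u" "length u = length q" "u ! j = e"
    "\<forall>i. j < i \<and> i < length q \<longrightarrow> u ! i = q ! i" "r (last u) = r (last q)"
    using fpath_replace_edge[OF q j e(1,2)] by blast
  have "plex ord p u" using u pivot assms len by (intro plexI[of _ _ k0]) auto
  moreover have "plex ord u q" using u e j by (intro plexI[of _ _ j]) auto
  ultimately show False using is_succ_no_between[OF succ u(1)] u len last by auto
qed

lemma is_succ_pivot_edge: "is_succ E s r ord (l + k0) [p ! k0] [q ! k0]"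
proof -
  have p: "fpath E s r l p" and q: "fpath E s r l q" and len: "length q = length p"
    and last: "r (last q) = r (last p)" using succ unfolding is_succ_def by auto
  have no_between: False
    if path: "fpath E s r (l + k0) [e]" and between: "plex ord [p ! k0] [e]" "plex ord [e] [q ! k0]"
      and range: "r e = r (p ! k0)" for e
  proof -
    have e: "e \<in> E (l + k0)" "(p ! k0, e) \<in> ord" "(e, q ! k0) \<in> ord"
      using path between unfolding plex_def by auto
    obtain u where u: "fpath E s r l u" "length u = length p" "u ! k0 = e"
      "\<forall>i. k0 < i \<and> i < length p \<longrightarrow> u ! i = p ! i" "r (last u) = r (last p)"
      using fpath_replace_edge[OF p pivot(1) e(1) range] by blast
    have "plex ord p u" using u e pivot by (intro plexI[of _ _ k0]) auto
    moreover have "plex ord u q" using u e pivot len by (intro plexI[of _ _ k0]) auto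
    ultimately show False using is_succ_no_between[OF succ u(1,2,5)] by blast
  qed
  have "r (p ! k0) = r (q ! k0)"
    using fpath_same_range_nth[OF p q len last[symmetric] pivot(1,3)] .
  moreover have "plex ord [p ! k0] [q ! k0]" using pivot(2) by (intro plexI[of _ _ 0]) auto
  ultimately show ?thesis
    unfolding is_succ_def using fpath_nth[OF p pivot(1)] fpath_nth[OF q] pivot(1) len no_between
    by (auto simp: length_Suc_conv)
qed

end

lemma paths_to_lex_induct [consumes 3, case_names succ between]:
  assumes "p \<in> paths_to l d w" "q \<in> paths_to l d w" "plex ord p q"
    and succ: "\<And>p q. p \<in> paths_to l d w \<Longrightarrow> q \<in> paths_to l d w \<Longrightarrow>
      is_succ E s r ord l p q \<Longrightarrow> \<Phi> p q"
    and between: "\<And>p u q. p \<in> paths_to l d w \<Longrightarrow> u \<in> paths_to l d w \<Longrightarrow> q \<in> paths_to l d w \<Longrightarrow>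
      plex ord p u \<Longrightarrow> plex ord u q \<Longrightarrow> \<Phi> p u \<Longrightarrow> \<Phi> u q \<Longrightarrow> \<Phi> p q"
  shows "\<Phi> p q"
proof -
  define interval where "interval p q = {u \<in> paths_to l d w. plex ord p u \<and> plex ord u q}" for p q
  have "\<Phi> p q" if "p \<in> paths_to l d w" "q \<in> paths_to l d w" "plex ord p q"
    "card (interval p q) = N" for N p q
    using that
  proof (induction N arbitrary: p q rule: less_induct)
    case (less N)
    have p: "fpath E s r l p" "length p = d" "r (last p) = w"
      and q: "fpath E s r l q" "length q = d" "r (last q) = w"
      using less.prems(1,2) unfolding paths_to_def by auto
    show ?case
    proof (cases "interval p q = {}")
      case True
      have "p \<noteq> []" using plex_nonempty[OF less.prems(3)] .
      moreover have "\<nexists>u. fpath E s r l u \<and> length u = length p \<and> r (last u) = r (last p) \<and>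
          plex ord p u \<and> plex ord u q"
        using True p unfolding interval_def paths_to_def by auto
      ultimately have "is_succ E s r ord l p q"
        unfolding is_succ_def using p q less.prems(3) by simp
      then show ?thesis using succ less.prems by blast
    next
      case False
      then obtain u where u: "u \<in> paths_to l d w" "plex ord p u" "plex ord u q"
        unfolding interval_def by blast
      then have u_path: "fpath E s r l u" "r (last u) = w" unfolding paths_to_def by auto
      have "interval p u \<subseteq> interval p q"
        using plex_trans[of l _ u q] u u_path q unfolding interval_def paths_to_def by auto
      moreover have "interval u q \<subseteq> interval p q"
        using plex_trans[of l p u] u u_path p unfolding interval_def paths_to_def by auto
      moreover have "u \<in> interval p q" "u \<notin> interval p u" "u \<notin> interval u q"
        using u plex_irrefl[OF u_path(1)] unfolding interval_def by auto
      moreover have "finite (interval p q)"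
        using finite_paths_to unfolding interval_def by simp
      ultimately have "card (interval p u) < N" "card (interval u q) < N"
        using less.prems(4) by (metis psubset_card_mono psubsetI)+
      then show ?thesis using less.IH u less.prems between by blast
    qed
  qed
  then show ?thesis using assms by blast
qed

end

section \<open>The labels \<open>m\<^sub>+\<close> and \<open>m\<^sub>-\<close>\<close>

locale k_simple_bratteli =
  fixes V :: "nat \<Rightarrow> 'v set" and E :: "nat \<Rightarrow> 'e set" and s r :: "'e \<Rightarrow> 'v"
    and k :: nat and P :: "nat \<Rightarrow> nat \<Rightarrow> 'v set"
  assumes k_simple: "k_simple V E s r k P"
begin

sublocale bratteli_diagram V E s r
  using k_simple unfolding k_simple_def by unfold_locales blast

lemma P_disjoint:
  "l \<ge> 1 \<Longrightarrow> c \<in> {1..k} \<Longrightarrow> c' \<in> {1..k} \<Longrightarrow> y \<in> P l c \<Longrightarrow> y \<in> P l c' \<Longrightarrow> c = c'"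
  using k_simple unfolding k_simple_def by blast

lemma P_source: "l \<ge> 1 \<Longrightarrow> c \<in> {1..k} \<Longrightarrow> e \<in> E l \<Longrightarrow> r e \<in> P (Suc l) c \<Longrightarrow> s e \<in> P l c"
  using k_simple unfolding k_simple_def by blast

lemma P_fpath_source:
  "l \<ge> 1 \<Longrightarrow> c \<in> {1..k} \<Longrightarrow> fpath E s r l p \<Longrightarrow> p \<noteq> [] \<Longrightarrow>
   r (last p) \<in> P (l + length p) c \<Longrightarrow> s (hd p) \<in> P l c"
proof (induction p arbitrary: l)
  case (Cons e p)
  then show ?case
    by (cases "p = []") (auto simp: fpath_Cons intro!: P_source)
qed simp

definition passes_through :: "(nat \<Rightarrow> 'e \<Rightarrow> bool) \<Rightarrow> 'v \<Rightarrow> nat \<Rightarrow> bool" where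
  "passes_through Q v c \<longleftrightarrow>
     (\<exists>p. fpath E s r 0 p \<and> p \<noteq> [] \<and> r (last p) = v \<and> (\<forall>j<length p. Q j (p ! j)) \<and>
          r (p ! 0) \<in> P 1 c)"

text \<open>For \<open>Q = emax\<close> (\<open>emin\<close>), \<open>mark Q l u a\<close> says \<open>m\<^sub>+(u) = a\<close> (\<open>m\<^sub>-(u) = a\<close>), where
  the label of a vertex of \<open>V\<^sup>l\<^sub>a\<close> is \<open>a\<close>.\<close>

definition mark :: "(nat \<Rightarrow> 'e \<Rightarrow> bool) \<Rightarrow> nat \<Rightarrow> 'v \<Rightarrow> nat \<Rightarrow> bool" where
  "mark Q l u a \<longleftrightarrow> a \<in> {1..k} \<and> (passes_through Q u a \<or> u \<in> P l a)"

lemma passes_through_level_one: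
  assumes "passes_through Q v c" "v \<in> V 1"
  shows "v \<in> P 1 c"
proof -
  obtain p where p: "fpath E s r 0 p" "p \<noteq> []" "r (last p) = v" "r (p ! 0) \<in> P 1 c"
    using assms(1) unfolding passes_through_def by blast
  then have "length p = 1" using fpath_from_root_length assms(2) by blast
  then show ?thesis using p by (simp add: last_conv_nth)
qed

lemma passes_through_last_edge:
  assumes "passes_through Q v c" "v \<in> V (Suc l)" "l \<ge> 1"
  obtains e where "e \<in> E l" "r e = v" "Q l e" "passes_through Q (s e) c"
proof -
  obtain p where p: "fpath E s r 0 p" "p \<noteq> []" "r (last p) = v" "\<forall>j<length p. Q j (p ! j)"
    "r (p ! 0) \<in> P 1 c" using assms(1) unfolding passes_through_def by blast
  have len: "length p = Suc l" using fpath_from_root_length p assms(2) by blast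
  have last: "last p = p ! l" using len p(2) by (simp add: last_conv_nth)
  have "fpath E s r 0 (take l p)" "take l p \<noteq> []"
    using fpath_take p(1) len assms(3) by auto
  moreover have "r (last (take l p)) = s (p ! l)"
    using fpath_link[OF p(1), of "l - 1"] len assms(3) by (subst last_conv_nth) auto
  ultimately have "passes_through Q (s (p ! l)) c"
    unfolding passes_through_def using p(4,5) assms(3) by (intro exI[of _ "take l p"]) auto
  then show thesis
    using that fpath_nth[OF p(1), of l] len last p(3,4) by simp
qed

context
  fixes Q :: "nat \<Rightarrow> 'e \<Rightarrow> bool"
  assumes Q: "edge_selector Q"
begin

lemma passes_through_mark_unique:
  "l \<ge> 1 \<Longrightarrow> v \<in> V l \<Longrightarrow> c \<in> {1..k} \<Longrightarrow> passes_through Q v c \<Longrightarrow> mark Q l v a \<Longrightarrow> c = a"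
proof (induction l arbitrary: v)
  case (Suc l)
  show ?case
  proof (cases "l = 0")
    case True
    then have "v \<in> P 1 c" "v \<in> P 1 a"
      using Suc.prems passes_through_level_one unfolding mark_def by auto
    then show ?thesis using Suc.prems P_disjoint unfolding mark_def by auto
  next
    case False
    then obtain e where e: "e \<in> E l" "r e = v" "Q l e" "passes_through Q (s e) c"
      using passes_through_last_edge Suc.prems by (metis One_nat_def less_one not_le)
    have "mark Q l (s e) a"
    proof (cases "v \<in> P (Suc l) a")
      case True
      then show ?thesis using P_source e False Suc.prems unfolding mark_def by auto
    next
      case False
      then have "passes_through Q v a" "a \<in> {1..k}" using Suc.prems unfolding mark_def by auto
      then obtain e' where "r e' = v" "Q l e'" "passes_through Q (s e') a"
        using passes_through_last_edge Suc.prems \<open>l \<noteq> 0\<close> by (metis One_nat_def less_one not_le)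
      then show ?thesis
        using Q e \<open>a \<in> {1..k}\<close> unfolding edge_selector_def mark_def by metis
    qed
    then show ?thesis
      using Suc.IH[OF _ source_in_level[OF e(1)] Suc.prems(3) e(4)] False by simp
  qed
qed simp

lemma mark_unique: "l \<ge> 1 \<Longrightarrow> u \<in> V l \<Longrightarrow> mark Q l u a \<Longrightarrow> mark Q l u b \<Longrightarrow> a = b"
  using passes_through_mark_unique P_disjoint unfolding mark_def by metis

lemma mark_source:
  assumes e: "e \<in> E l" "Q l e" and l: "l \<ge> 1" and mark: "mark Q (Suc l) (r e) a"
  shows "mark Q l (s e) a"
proof (cases "r e \<in> P (Suc l) a")
  case True
  then show ?thesis using P_source e l mark unfolding mark_def by blast
next
  case False
  then have "passes_through Q (r e) a" using mark unfolding mark_def by blast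
  then obtain e' where "r e' = r e" "Q l e'" "passes_through Q (s e') a"
    using passes_through_last_edge range_in_level[OF e(1)] l by metis
  then show ?thesis using Q e mark unfolding edge_selector_def mark_def by metis
qed

lemma mark_range:
  assumes e: "e \<in> E l" "Q l e" and l: "l \<ge> 1" and mark: "mark Q l (s e) a"
    and through: "r e \<in> Vo V P k (Suc l) \<Longrightarrow> \<exists>c\<in>{1..k}. passes_through Q (r e) c"
  shows "mark Q (Suc l) (r e) a"
proof (cases "r e \<in> Vo V P k (Suc l)")
  case True
  then obtain c where c: "c \<in> {1..k}" "passes_through Q (r e) c" using through by blast
  then obtain e' where "r e' = r e" "Q l e'" "passes_through Q (s e') c"
    using passes_through_last_edge range_in_level[OF e(1)] l by metis
  then have "mark Q l (s e) c" using Q e c unfolding edge_selector_def mark_def by metis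
  then show ?thesis using c mark_unique[OF l source_in_level[OF e(1)] _ mark] unfolding mark_def by blast
next
  case False
  then obtain c where c: "c \<in> {1..k}" "r e \<in> P (Suc l) c"
    using range_in_level[OF e(1)] unfolding Vo_def by blast
  then have "mark Q l (s e) c" using P_source e l unfolding mark_def by blast
  then show ?thesis using c mark_unique[OF l source_in_level[OF e(1)] _ mark] unfolding mark_def by blast
qed

end

end

locale k_simple_ordered_bratteli =
  fixes V :: "nat \<Rightarrow> 'v set" and E :: "nat \<Rightarrow> 'e set" and s r :: "'e \<Rightarrow> 'v"
    and ord :: "'e rel" and k :: nat and P :: "nat \<Rightarrow> nat \<Rightarrow> 'v set" and L :: nat
  assumes k_simple_ordered: "k_simple_ordered V E s r ord k P L"
begin

sublocale k_simple_bratteli V E s r k P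
  using k_simple_ordered unfolding k_simple_ordered_def by unfold_locales blast

sublocale ordered_bratteli V E s r ord
  using k_simple_ordered unfolding k_simple_ordered_def by unfold_locales blast

abbreviation m_plus :: "nat \<Rightarrow> 'v \<Rightarrow> nat \<Rightarrow> bool" where
  "m_plus \<equiv> mark (emax E r ord)"

abbreviation m_minus :: "nat \<Rightarrow> 'v \<Rightarrow> nat \<Rightarrow> bool" where
  "m_minus \<equiv> mark (emin E r ord)"

lemma max_through_eq: "max_through V E s r ord P = passes_through (emax E r ord)"
  unfolding max_through_def passes_through_def by (intro ext) simp

lemma min_through_eq: "min_through V E s r ord P = passes_through (emin E r ord)"
  unfolding min_through_def passes_through_def by (intro ext) simp

lemma ex_passes_through_Vo:
  assumes "l \<ge> 1" "l \<ge> L" "v \<in> Vo V P k l"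
  shows "\<exists>c\<in>{1..k}. passes_through (emax E r ord) v c"
    and "\<exists>c\<in>{1..k}. passes_through (emin E r ord) v c"
proof -
  have "\<forall>n. n \<ge> L \<and> n \<ge> 1 \<longrightarrow> (\<forall>v\<in>Vo V P k n.
          (\<exists>i\<in>{1..k}. max_through V E s r ord P v i) \<and>
          (\<exists>i\<in>{1..k}. min_through V E s r ord P v i))"
    using k_simple_ordered unfolding k_simple_ordered_def by (elim conjE) assumption
  then show "\<exists>c\<in>{1..k}. passes_through (emax E r ord) v c"
    and "\<exists>c\<in>{1..k}. passes_through (emin E r ord) v c"
    using assms unfolding max_through_eq min_through_eq by blast+
qed

lemma cond_3a:
  assumes "l \<ge> 1" "l \<ge> L" "s e \<in> Vo V P k l" "is_succ E s r ord l [e] [f]"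
  shows "\<exists>c\<in>{1..k}. passes_through (emax E r ord) (s e) c \<and> passes_through (emin E r ord) (s f) c"
proof -
  have "e \<in> E l" using assms(4) unfolding is_succ_def by simp
  then show ?thesis
    using k_simple_ordered assms unfolding k_simple_ordered_def max_through_eq min_through_eq
    by (metis list.sel(1) list.distinct(1))
qed

lemma cond_3b:
  assumes "l \<ge> 2" "r e \<in> Vo V P k (Suc l)" "\<not> emax E r ord l e" "c \<in> {1..k}" "s e \<in> P l c"
    "is_succ E s r ord l [e] [f]"
  shows "passes_through (emin E r ord) (s f) c"
proof -
  have "e \<in> E l" using assms(6) unfolding is_succ_def by simp
  moreover have "Suc l \<ge> 3" "Suc l - 1 = l" using assms(1) by simp_all
  ultimately show ?thesis
    using k_simple_ordered assms unfolding k_simple_ordered_def min_through_eq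
    by (metis list.sel(1))
qed

lemma m_plus_range:
  assumes "l \<ge> 1" "l \<ge> L" "e \<in> E l" "emax E r ord l e" "m_plus l (s e) a"
  shows "m_plus (Suc l) (r e) a"
  using mark_range[OF edge_selector_emax] ex_passes_through_Vo(1)[of "Suc l"] assms by simp

lemma m_plus_along_fpath:
  assumes p: "fpath E s r n p" and n: "n \<ge> 1" "n \<ge> L" and j: "j < length p"
    and emax: "\<forall>i<j. emax E r ord (n + i) (p ! i)" and mark: "m_plus n (s (hd p)) a"
  shows "m_plus (n + j) (s (p ! j)) a"
  using j emax
proof (induction j)
  case 0
  then show ?case using mark by (simp add: hd_conv_nth)
next
  case (Suc j)
  have "m_plus (Suc (n + j)) (r (p ! j)) a"
    using m_plus_range fpath_nth[OF p] Suc n by simp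
  then show ?case using fpath_link[OF p] Suc.prems by simp
qed

lemma m_minus_along_fpath:
  assumes q: "fpath E s r n q" and n: "n \<ge> 1" and j: "j < length q"
    and emin: "\<forall>i<j. emin E r ord (n + i) (q ! i)" and mark: "m_minus (n + j) (s (q ! j)) a"
  shows "m_minus n (s (hd q)) a"
  using j emin mark
proof (induction j)
  case 0
  then show ?case by (simp add: hd_conv_nth)
next
  case (Suc j)
  then have "m_minus (Suc (n + j)) (r (q ! j)) a" using fpath_link[OF q] by simp
  then have "m_minus (n + j) (s (q ! j)) a"
    using mark_source[OF edge_selector_emin] fpath_nth[OF q] Suc.prems n by simp
  then show ?case using Suc by simp
qed

lemma m_minus_succ_edge:
  assumes l: "l \<ge> 2" "l \<ge> L" and succ: "is_succ E s r ord l [e] [f]"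
    and mark: "m_plus l (s e) a"
  shows "m_minus l (s f) a"
proof -
  have e: "e \<in> E l" and f: "f \<in> E l" and same_range: "r e = r f" and "(e, f) \<in> ord"
    using succ unfolding is_succ_def plex_def by auto
  then have not_emax: "\<not> emax E r ord l e" unfolding emax_def by auto
  have l1: "l \<ge> 1" using l by simp
  have mark_c: "c = a" if "m_plus l (s e) c" for c
    using mark_unique[OF edge_selector_emax l1 source_in_level[OF e] that mark] .
  show ?thesis
  proof (cases "r e \<in> Vo V P k (Suc l)")
    case False
    then obtain c where c: "c \<in> {1..k}" "r e \<in> P (Suc l) c"
      using range_in_level[OF e] unfolding Vo_def by blast
    then have "s e \<in> P l c" "s f \<in> P l c" using P_source l1 e f same_range by auto
    then show ?thesis using c mark_c unfolding mark_def by blast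
  next
    case True
    show ?thesis
    proof (cases "s e \<in> Vo V P k l")
      case True
      then obtain c where "c \<in> {1..k}" "passes_through (emax E r ord) (s e) c"
        "passes_through (emin E r ord) (s f) c"
        using cond_3a l1 l succ by blast
      then show ?thesis using mark_c unfolding mark_def by blast
    next
      case False
      then obtain c where c: "c \<in> {1..k}" "s e \<in> P l c"
        using source_in_level[OF e] unfolding Vo_def by blast
      then have "passes_through (emin E r ord) (s f) c"
        using cond_3b l \<open>r e \<in> Vo V P k (Suc l)\<close> not_emax succ by blast
      then show ?thesis using c mark_c unfolding mark_def by blast
    qed
  qed
qed

lemma m_plus_succ_eq_m_minus:
  assumes n: "n \<ge> 2" "n \<ge> L" and succ: "is_succ E s r ord n p q"
    and a: "m_plus n (s (hd p)) a" and b: "m_minus n (s (hd q)) b"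
  shows "a = b"
proof -
  have p: "fpath E s r n p" and q: "fpath E s r n q" and len: "length q = length p"
    and "p \<noteq> []" and "plex ord p q"
    using succ unfolding is_succ_def by auto
  then obtain k0 where pivot: "k0 < length p" "(p ! k0, q ! k0) \<in> ord"
    "\<forall>i. k0 < i \<and> i < length p \<longrightarrow> p ! i = q ! i"
    unfolding plex_def by blast
  have "m_plus (n + k0) (s (p ! k0)) a"
    using m_plus_along_fpath[OF p _ n(2) pivot(1) _ a] is_succ_emax_below_pivot[OF succ pivot] n
    by simp
  then have "m_minus (n + k0) (s (q ! k0)) a"
    using m_minus_succ_edge is_succ_pivot_edge[OF succ pivot] n by simp
  then have "m_minus n (s (hd q)) a"
    using m_minus_along_fpath[OF q _ _ _] is_succ_emin_below_pivot[OF succ pivot] pivot(1) len n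
    by simp
  moreover have "q \<noteq> []" using len \<open>p \<noteq> []\<close> by auto
  ultimately show ?thesis
    using mark_unique[OF edge_selector_emin _ fpath_hd_in_level[OF q] _ b] n by simp
qed

end

section \<open>Walks in the transition graph\<close>

definition tg_adj ::
  "(nat \<Rightarrow> 'v set) \<Rightarrow> (nat \<Rightarrow> 'e set) \<Rightarrow> ('e \<Rightarrow> 'v) \<Rightarrow> ('e \<Rightarrow> 'v) \<Rightarrow> 'e rel \<Rightarrow> nat \<Rightarrow>
   (nat \<Rightarrow> nat \<Rightarrow> 'v set) \<Rightarrow> nat \<Rightarrow> nat \<Rightarrow> nat \<Rightarrow> bool" where
  "tg_adj V E s r ord k P n a b \<longleftrightarrow> (\<exists>v. tg_edge V E s r ord k P n v a b)"

lemma tg_walk_singleton: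
  "tg_edge V E s r ord k P n v a b \<Longrightarrow> tg_walk V E s r ord k P n [v] a b"
  unfolding tg_walk_def by (intro exI[of _ "[a, b]"]) simp

lemma tg_walk_Cons:
  assumes "tg_edge V E s r ord k P n v a b" "tg_walk V E s r ord k P n vs b c"
  shows "tg_walk V E s r ord k P n (v # vs) a c"
proof -
  obtain ys where ys: "length ys = Suc (length vs)" "vs \<noteq> []" "ys ! 0 = b" "ys ! length vs = c"
    "\<forall>j<length vs. tg_edge V E s r ord k P n (vs ! j) (ys ! j) (ys ! Suc j)"
    using assms(2) unfolding tg_walk_def by blast
  have "\<forall>j<length (v # vs). tg_edge V E s r ord k P n ((v # vs) ! j) ((a # ys) ! j) ((a # ys) ! Suc j)"
    using assms(1) ys(3,5) by (auto simp: nth_Cons split: nat.split)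
  then show ?thesis
    unfolding tg_walk_def using ys(1,4) by (intro exI[of _ "a # ys"]) auto
qed

lemma tg_walk_of_rtranclp:
  assumes "(tg_adj V E s r ord k P n)\<^sup>*\<^sup>* b c" "tg_edge V E s r ord k P n v a b"
  shows "\<exists>vs. hd vs = v \<and> tg_walk V E s r ord k P n vs a c"
  using assms
proof (induction arbitrary: v a rule: converse_rtranclp_induct)
  case base
  then have "tg_walk V E s r ord k P n [v] a c" by (rule tg_walk_singleton)
  then show ?case by (intro exI[of _ "[v]"]) simp
next
  case (step b b')
  then obtain v' where "tg_edge V E s r ord k P n v' b b'" unfolding tg_adj_def by blast
  then obtain vs where "tg_walk V E s r ord k P n vs b c" using step.IH by blast
  then have "tg_walk V E s r ord k P n (v # vs) a c" by (rule tg_walk_Cons[OF step.prems])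
  then show ?case by (intro exI[of _ "v # vs"]) simp
qed

context k_simple_ordered_bratteli
begin

lemma vertex_marks_tg_reachable:
  assumes n: "n \<ge> 1" "n \<ge> L" and u: "u \<in> V n"
  obtains c d where "m_minus n u c" "m_plus n u d" "(tg_adj V E s r ord k P n)\<^sup>*\<^sup>* c d"
proof (cases "u \<in> Vo V P k n")
  case True
  then obtain c d where "c \<in> {1..k}" "passes_through (emin E r ord) u c"
    "d \<in> {1..k}" "passes_through (emax E r ord) u d"
    using ex_passes_through_Vo n by blast
  moreover from this have "tg_adj V E s r ord k P n c d"
    using True unfolding tg_adj_def tg_edge_def max_through_eq min_through_eq by blast
  ultimately show thesis using that unfolding mark_def by blast
next
  case False
  then obtain c where "c \<in> {1..k}" "u \<in> P n c" using u unfolding Vo_def by blast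
  then show thesis using that unfolding mark_def by blast
qed

lemma m_plus_m_minus_tg_reachable:
  assumes n: "n \<ge> 2" "n \<ge> L"
    and paths: "p \<in> paths_to n d w" "q \<in> paths_to n d w" "plex ord p q"
    and marks: "m_plus n (s (hd p)) a" "m_minus n (s (hd q)) b"
  shows "(tg_adj V E s r ord k P n)\<^sup>*\<^sup>* a b"
  using paths marks
proof (induction p q arbitrary: a b rule: paths_to_lex_induct)
  case (succ p q)
  then show ?case using m_plus_succ_eq_m_minus n by blast
next
  case (between p u q)
  have "u \<noteq> []" using plex_nonempty[OF between.hyps(5)] .
  then have "s (hd u) \<in> V n"
    using fpath_hd_in_level between.hyps(2) unfolding paths_to_def by blast
  then obtain c d where "m_minus n (s (hd u)) c" "m_plus n (s (hd u)) d"
    "(tg_adj V E s r ord k P n)\<^sup>*\<^sup>* c d"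
    using vertex_marks_tg_reachable n by (metis one_le_numeral order_trans)
  then show ?case using between.IH between.prems by (meson rtranclp_trans)
qed

lemma ex_plex_paths_from_Vo:
  assumes non_elementary: "non_elementary V E s r k P" and n: "n \<ge> 1" and v: "v \<in> Vo V P k n"
  obtains d w p q where "p \<in> paths_to n d w" "q \<in> paths_to n d w" "plex ord p q"
    "s (hd p) = v" "s (hd q) = v"
proof -
  obtain m where m: "m > n" and few_paths: "\<forall>v\<in>Vo V P k n. \<forall>w\<in>Vo V P k m.
      card (paths_between E s r n m v w) = 0 \<or> card (paths_between E s r n m v w) \<ge> 2"
    using non_elementary n unfolding non_elementary_def by blast
  obtain p0 where p0: "fpath E s r n p0" "length p0 = m - n" "s (hd p0) = v"
    using ex_fpath_from[of v n "m - n - 1"] v m unfolding Vo_def by auto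
  define w where "w = r (last p0)"
  have "p0 \<noteq> []" using p0(2) m by auto
  have "w \<in> V m" using fpath_last_in_level[OF p0(1) \<open>p0 \<noteq> []\<close>] p0(2) m w_def by simp
  moreover have "w \<notin> P m c" if "c \<in> {1..k}" for c
    using P_fpath_source[OF n that p0(1) \<open>p0 \<noteq> []\<close>] p0 m v w_def that unfolding Vo_def by auto
  ultimately have w: "w \<in> Vo V P k m" unfolding Vo_def by blast
  define B where "B = paths_between E s r n m v w"
  have "B \<subseteq> paths_to n (m - n) w" unfolding B_def paths_between_def paths_to_def by auto
  then have "finite B" using finite_paths_to finite_subset by blast
  moreover have "p0 \<in> B" using p0 \<open>p0 \<noteq> []\<close> unfolding B_def w_def paths_between_def by simp
  ultimately have "card B \<ge> 2" using few_paths v w unfolding B_def by fastforce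
  then obtain p1 where p1: "p1 \<in> B" "p1 \<noteq> p0"
    using \<open>finite B\<close> \<open>p0 \<in> B\<close> by (metis card_le_Suc0_iff_eq not_less_eq_eq numeral_2_eq_2)
  have paths: "p0 \<in> paths_to n (m - n) w" "p1 \<in> paths_to n (m - n) w" "s (hd p1) = v"
    using \<open>B \<subseteq> paths_to n (m - n) w\<close> \<open>p0 \<in> B\<close> p1(1) unfolding B_def paths_between_def by auto
  then have "plex ord p0 p1 \<or> plex ord p1 p0"
    using plex_total[of n p0 p1] p1(2) unfolding paths_to_def by auto
  then show thesis using that paths p0(3) by blast
qed

end

theorem corollary7p4:
  fixes V :: "nat \<Rightarrow> 'v set" and E :: "nat \<Rightarrow> 'e set" and s r :: "'e \<Rightarrow> 'v"
    and ord :: "'e rel" and k :: nat and P :: "nat \<Rightarrow> nat \<Rightarrow> 'v set" and L n :: nat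
    and v1 :: 'v and i j :: nat
  assumes "k \<ge> 2"
    and "k_simple_ordered V E s r ord k P L"
    and "non_elementary V E s r k P"
    and "n \<ge> max 2 L"
    and "tg_edge V E s r ord k P n v1 i j"
  shows "\<exists>vs. hd vs = v1 \<and> tg_walk V E s r ord k P n vs i i"
proof -
  \<comment> \<open>The argument does not use \<open>k \<ge> 2\<close>.\<close>
  interpret k_simple_ordered_bratteli V E s r ord k P L
    using assms(2) by unfold_locales
  have n: "n \<ge> 1" "n \<ge> 2" "n \<ge> L" using assms(4) by auto
  have v1: "v1 \<in> Vo V P k n" and marks: "m_minus n v1 i" "m_plus n v1 j"
    using assms(5) unfolding tg_edge_def mark_def max_through_eq min_through_eq by auto
  obtain d w p q where "p \<in> paths_to n d w" "q \<in> paths_to n d w" "plex ord p q"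
    "s (hd p) = v1" "s (hd q) = v1"
    using ex_plex_paths_from_Vo[OF assms(3) n(1) v1] .
  then have "(tg_adj V E s r ord k P n)\<^sup>*\<^sup>* j i"
    using m_plus_m_minus_tg_reachable n marks by simp
  then show ?thesis by (rule tg_walk_of_rtranclp[OF _ assms(5)])
qed

end
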